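(* Let $\alpha\in(0,1)$ and $\nu\in\mathcal M^+_\alpha(\mathbb R)$. Then there exists $\mu\in\mathcal M^+_1(\mathbb R)$ such that $$C_\alpha[\nu](z)=C_1[\mu](z),\qquad z\in\mathbb C^+,$$ if and only if $$\int_{(-\infty,0]}\frac{\log(|t|+1)\,\nu(dt)}{(1+|t|)^\alpha}<\infty.$$
   Context: $\mathbb C^+=\{z:\operatorname{Im}z>0\}$. For $\alpha\ge0$, $\mathcal M^+_\alpha(\mathbb R)$ is the set of positive Borel (Radon) measures $\mu$ on $\mathbb R$ with $\int_{\mathbb R}(1+|t|)^{-\alpha}\mu(dt)<\infty$. For $\alpha>0$, $C_\alpha[\mu](z)=\int_{\mathbb R}\frac{\mu(dt)}{(z+t)^\alpha}$, $z\in\mathbb C^+$, with the principal branch of the power. *)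

theory Defs
  imports "HOL-Analysis.Analysis"
begin

text \<open>The class M^+_alpha(R): positive Borel measures mu on R with
  integral of (1+|t|)^(-alpha) finite (this also makes mu locally finite, i.e. Radon).\<close>
definition Mplus :: "real \<Rightarrow> real measure set" where
  "Mplus \<alpha> = {\<mu>. sets \<mu> = sets borel \<and>
      (\<integral>\<^sup>+ t. ennreal ((1 + \<bar>t\<bar>) powr (-\<alpha>)) \<partial>\<mu>) < \<infinity>}"

definition Cauchy_tr :: "real \<Rightarrow> real measure \<Rightarrow> complex \<Rightarrow> complex" where
  "Cauchy_tr \<alpha> \<mu> z = (\<integral> t. inverse ((z + complex_of_real t) powr complex_of_real \<alpha>) \<partial>\<mu>)"

end

theory Submission
  imports Defs "HOL-Complex_Analysis.Complex_Analysis"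
begin

(* Put p = 1 / (1 - \<alpha>) and K = \<integral>\<^sub>0\<^sup>\<infinity> dx / (1 + x\<^sup>p). For w off the closed negative real axis,
   \<integral>\<^sub>0\<^sup>\<infinity> dx / (w + x\<^sup>p) = K w\<^sup>-\<^sup>\<alpha>: by scaling x for w > 0, and by analytic continuation in general.
   Hence C\<^sub>\<alpha>[\<nu>] = C\<^sub>1[\<mu>] for the image \<mu> of K\<^sup>-\<^sup>1 \<nu> \<otimes> dx|[0,\<infinity>) under (t, x) \<mapsto> t + x\<^sup>p, and
   \<mu> lies in M\<^sub>1\<^sup>+ as soon as G(t) = \<integral>\<^sub>0\<^sup>\<infinity> dx / (1 + |t + x\<^sup>p|) is \<nu>-integrable. Now
   G(t) = O((1 + |t|)\<^sup>-\<^sup>\<alpha>) for t \<ge> -1 and G(t) = O((1 + |t|)\<^sup>-\<^sup>\<alpha> log (1 + |t|)) for t < -1, the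
   logarithm coming from the x near (-t)\<^sup>1\<^sup>/\<^sup>p where x\<^sup>p crosses -t.
   Conversely, \<integral>\<^sub>1\<^sup>\<infinity> -Im C(iy) dy / y is finite for C = C\<^sub>1[\<mu>] with \<mu> in M\<^sub>1\<^sup>+, while for
   C = C\<^sub>\<alpha>[\<nu>] it dominates a multiple of the logarithmic moment of \<nu> on (-\<infinity>, 0]; so no
   uniqueness theorem for the representing measure is needed. *)

section \<open>Cauchy transforms of measures of class \<open>M\<^sub>\<alpha>\<^sup>+\<close>\<close>

lemma Mplus_measurable_eq: "\<mu> \<in> Mplus a \<Longrightarrow> measurable \<mu> N = measurable borel N"
  by (intro measurable_cong_sets) (auto simp: Mplus_def)

lemma measurable_pair_lborel_eq:
  "sets \<mu> = sets borel \<Longrightarrow> measurable (\<mu> \<Otimes>\<^sub>M lborel) N = measurable (borel \<Otimes>\<^sub>M borel) N"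
  by (intro measurable_cong_sets sets_pair_measure_cong) auto

lemma Mplus_sigma_finite:
  assumes \<mu>: "\<mu> \<in> Mplus a" and "0 \<le> a"
  shows "sigma_finite_measure \<mu>"
proof -
  have sets: "sets \<mu> = sets borel" and fin: "(\<integral>\<^sup>+t. ennreal ((1 + \<bar>t\<bar>) powr (-a)) \<partial>\<mu>) < \<infinity>"
    using \<mu> by (auto simp: Mplus_def)
  have "emeasure \<mu> {-real n..real n} < \<infinity>" for n :: nat
  proof -
    have "ennreal ((1 + real n) powr (-a)) * emeasure \<mu> {-real n..real n}
        = (\<integral>\<^sup>+t. ennreal ((1 + real n) powr (-a)) * indicator {-real n..real n} t \<partial>\<mu>)"
      using sets by (simp add: nn_integral_cmult_indicator)
    also have "\<dots> \<le> (\<integral>\<^sup>+t. ennreal ((1 + \<bar>t\<bar>) powr (-a)) \<partial>\<mu>)"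
      using \<open>0 \<le> a\<close> by (intro nn_integral_mono) (auto simp: indicator_def intro!: powr_mono2')
    finally have "ennreal ((1 + real n) powr (-a)) * emeasure \<mu> {-real n..real n} < \<infinity>"
      using fin by (rule le_less_trans)
    then show ?thesis
      by (auto simp: ennreal_mult_less_top)
  qed
  moreover have "(\<Union>n::nat. {-real n..real n}) = UNIV"
  proof safe
    fix x :: real
    obtain n :: nat where "\<bar>x\<bar> \<le> real n"
      using real_arch_simple by blast
    then show "x \<in> (\<Union>n. {-real n..real n})"
      by (intro UN_I[of n]) (auto simp: abs_le_iff)
  qed auto
  ultimately show ?thesis
    unfolding sigma_finite_measure_def
    by (intro exI[of _ "range (\<lambda>n::nat. {-real n..real n})"])
       (auto simp: sets sets_eq_imp_space_eq[OF sets] less_top[symmetric])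
qed

lemma one_plus_abs_le_norm_add_of_real:
  fixes z :: complex
  assumes z: "0 < Im z"
  shows "1 + \<bar>u\<bar> \<le> (1 + (1 + norm z) / Im z) * norm (z + of_real u)"
proof -
  have "1 \<le> norm (z + of_real u) / Im z"
    using abs_Im_le_cmod[of "z + of_real u"] z by simp
  then have "(1 + norm z) * 1 \<le> (1 + norm z) * (norm (z + of_real u) / Im z)"
    by (intro mult_left_mono) auto
  moreover have "\<bar>u\<bar> - norm z \<le> norm (z + of_real u)"
    using norm_diff_ineq[of "of_real u" z] by (simp add: add.commute)
  ultimately show ?thesis
    by (simp add: algebra_simps)
qed

lemma Mplus_integrable_Cauchy_kernel:
  assumes \<nu>: "\<nu> \<in> Mplus \<alpha>" and "0 \<le> \<alpha>" and z: "0 < Im z"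
  shows "integrable \<nu> (\<lambda>t. inverse ((z + of_real t) powr of_real \<alpha>))"
proof (rule integrableI_bounded)
  define C where "C = 1 + (1 + norm z) / Im z"
  have "0 < C"
    using z by (simp add: C_def add_pos_nonneg)
  have bound: "norm (inverse ((z + of_real t) powr of_real \<alpha>)) \<le> C powr \<alpha> * (1 + \<bar>t\<bar>) powr (-\<alpha>)"
    for t
  proof -
    have "z + of_real t \<noteq> 0"
      using z by (auto simp: complex_eq_iff)
    then have N: "0 < norm (z + of_real t) powr \<alpha>"
      by simp
    have "(1 + \<bar>t\<bar>) powr \<alpha> \<le> C powr \<alpha> * norm (z + of_real t) powr \<alpha>"
      using one_plus_abs_le_norm_add_of_real[OF z, of t] \<open>0 \<le> \<alpha>\<close> \<open>0 < C\<close>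
      by (subst powr_mult[symmetric]) (auto intro: powr_mono2 simp: C_def)
    then have "inverse (norm (z + of_real t) powr \<alpha>) \<le> C powr \<alpha> * (1 + \<bar>t\<bar>) powr (-\<alpha>)"
      using N by (simp add: powr_minus field_simps)
    then show ?thesis
      by (simp add: norm_inverse norm_powr_real_powr')
  qed
  have "(\<integral>\<^sup>+t. ennreal (norm (inverse ((z + of_real t) powr of_real \<alpha>))) \<partial>\<nu>)
      \<le> (\<integral>\<^sup>+t. ennreal (C powr \<alpha>) * ennreal ((1 + \<bar>t\<bar>) powr (-\<alpha>)) \<partial>\<nu>)"
    using bound by (intro nn_integral_mono) (simp add: ennreal_mult[symmetric] ennreal_leI)
  also have "\<dots> = ennreal (C powr \<alpha>) * (\<integral>\<^sup>+t. ennreal ((1 + \<bar>t\<bar>) powr (-\<alpha>)) \<partial>\<nu>)"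
    by (rule nn_integral_cmult) (simp add: Mplus_measurable_eq[OF \<nu>])
  also have "\<dots> < \<infinity>"
    using \<nu> by (simp add: Mplus_def ennreal_mult_less_top)
  finally show "(\<integral>\<^sup>+t. ennreal (norm (inverse ((z + of_real t) powr of_real \<alpha>))) \<partial>\<nu>) < \<infinity>" .
qed (simp add: Mplus_measurable_eq[OF \<nu>])

lemma neg_Im_inverse_powr:
  fixes w :: complex
  assumes "0 < Im w"
  shows "- Im (inverse (w powr of_real a)) = norm w powr (-a) * sin (a * Im (Ln w))"
proof -
  have "w \<noteq> 0"
    using assms by auto
  then show ?thesis
    by (simp add: powr_def exp_minus[symmetric] Im_exp)
qed

lemma Im_inverse_powr_nonpos:
  fixes w :: complex
  assumes w: "0 < Im w" and "0 \<le> a" "a \<le> 1"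
  shows "Im (inverse (w powr of_real a)) \<le> 0"
proof -
  have "0 < Im (Ln w)" "Im (Ln w) < pi"
    using Im_Ln_pos_lt_imp[OF w] by auto
  then have "a * Im (Ln w) \<le> pi"
    using \<open>a \<le> 1\<close> \<open>0 \<le> a\<close> by (metis less_eq_real_def mult_left_le_one_le order.trans)
  then have "0 \<le> sin (a * Im (Ln w))"
    using \<open>0 \<le> a\<close> \<open>0 < Im (Ln w)\<close> by (intro sin_ge_zero) auto
  then have "0 \<le> norm w powr (-a) * sin (a * Im (Ln w))"
    by simp
  then show ?thesis
    using neg_Im_inverse_powr[OF w, of a] by linarith
qed

lemma neg_Im_Cauchy_tr_eq_nn_integral:
  assumes \<nu>: "\<nu> \<in> Mplus \<alpha>" and "0 \<le> \<alpha>" "\<alpha> \<le> 1" and z: "0 < Im z"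
  shows "ennreal (- Im (Cauchy_tr \<alpha> \<nu> z))
       = (\<integral>\<^sup>+t. ennreal (- Im (inverse ((z + of_real t) powr of_real \<alpha>))) \<partial>\<nu>)"
proof -
  let ?k = "\<lambda>t. inverse ((z + of_real t) powr of_real \<alpha>)"
  have int: "integrable \<nu> ?k"
    using Mplus_integrable_Cauchy_kernel[OF \<nu> \<open>0 \<le> \<alpha>\<close> z] .
  have "- Im (Cauchy_tr \<alpha> \<nu> z) = (\<integral>t. - Im (?k t) \<partial>\<nu>)"
    using integral_Im[OF int] by (simp add: Cauchy_tr_def)
  also have "ennreal \<dots> = (\<integral>\<^sup>+t. ennreal (- Im (?k t)) \<partial>\<nu>)"
    using int Im_inverse_powr_nonpos[of "z + of_real _" \<alpha>] z assms(2,3)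
    by (intro nn_integral_eq_integral[symmetric] integrable_minus integrable_Im AE_I2) auto
  finally show ?thesis .
qed

section \<open>Necessity of the logarithmic moment condition\<close>

definition left_log_moment :: "real \<Rightarrow> real measure \<Rightarrow> ennreal" where
  "left_log_moment \<alpha> \<nu> =
     (\<integral>\<^sup>+t. indicator {..0} t * ennreal (ln (\<bar>t\<bar> + 1) / (1 + \<bar>t\<bar>) powr \<alpha>) \<partial>\<nu>)"

definition log_mean_Im_Cauchy_tr :: "real \<Rightarrow> real measure \<Rightarrow> ennreal" where
  "log_mean_Im_Cauchy_tr \<alpha> \<nu> =
     (\<integral>\<^sup>+y\<in>{1..}. ennreal (- Im (Cauchy_tr \<alpha> \<nu> (\<i> * of_real y)) / y) \<partial>lborel)"

lemma log_mean_Im_Cauchy_tr_eq: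
  assumes \<nu>: "\<nu> \<in> Mplus \<alpha>" and "0 \<le> \<alpha>" "\<alpha> \<le> 1"
  shows "log_mean_Im_Cauchy_tr \<alpha> \<nu> =
    (\<integral>\<^sup>+t. (\<integral>\<^sup>+y\<in>{1..}. ennreal (- Im (inverse ((\<i> * of_real y + of_real t) powr of_real \<alpha>)) / y)
       \<partial>lborel) \<partial>\<nu>)"
proof -
  interpret pair_sigma_finite \<nu> lborel
    using Mplus_sigma_finite[OF \<nu> \<open>0 \<le> \<alpha>\<close>] by (intro pair_sigma_finite.intro sigma_finite_lborel)
  let ?k = "\<lambda>t y. - Im (inverse ((\<i> * of_real y + of_real t) powr of_real \<alpha>))"
  have "ennreal (- Im (Cauchy_tr \<alpha> \<nu> (\<i> * of_real y)) / y) = (\<integral>\<^sup>+t. ennreal (?k t y / y) \<partial>\<nu>)"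
    if "1 \<le> y" for y
  proof -
    have "ennreal (- Im (Cauchy_tr \<alpha> \<nu> (\<i> * of_real y)) / y)
        = ennreal (- Im (Cauchy_tr \<alpha> \<nu> (\<i> * of_real y))) * ennreal (inverse y)"
      using that by (simp add: divide_inverse ennreal_mult''[symmetric])
    also have "\<dots> = (\<integral>\<^sup>+t. ennreal (?k t y) * ennreal (inverse y) \<partial>\<nu>)"
      using that assms
      by (simp add: neg_Im_Cauchy_tr_eq_nn_integral nn_integral_multc Mplus_measurable_eq add.commute)
    also have "\<dots> = (\<integral>\<^sup>+t. ennreal (?k t y / y) \<partial>\<nu>)"
      using that by (simp add: divide_inverse ennreal_mult''[symmetric])
    finally show ?thesis .
  qed
  then have "log_mean_Im_Cauchy_tr \<alpha> \<nu> = (\<integral>\<^sup>+y. \<integral>\<^sup>+t. ennreal (?k t y / y) * indicator {1..} y \<partial>\<nu> \<partial>lborel)"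
    unfolding log_mean_Im_Cauchy_tr_def
    by (intro nn_integral_cong) (simp add: nn_integral_multc Mplus_measurable_eq[OF \<nu>] indicator_def)
  also have "\<dots> = (\<integral>\<^sup>+t. \<integral>\<^sup>+y. ennreal (?k t y / y) * indicator {1..} y \<partial>lborel \<partial>\<nu>)"
    using \<nu> by (intro Fubini') (simp add: measurable_pair_lborel_eq Mplus_def)
  finally show ?thesis .
qed

lemma nn_integral_inverse_sum_squares_le:
  fixes u :: real
  shows "(\<integral>\<^sup>+y\<in>{1..}. ennreal (1 / (u\<^sup>2 + y\<^sup>2)) \<partial>lborel) \<le> ennreal (2 / (1 + \<bar>u\<bar>))"
proof -
  have "(\<integral>\<^sup>+y\<in>{1..}. ennreal (1 / (u\<^sup>2 + y\<^sup>2)) \<partial>lborel)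
      \<le> (\<integral>\<^sup>+y\<in>{1..}. ennreal (2 / (\<bar>u\<bar> + y)\<^sup>2) \<partial>lborel)"
  proof (intro nn_integral_mono)
    fix y :: real
    have "1 / (u\<^sup>2 + y\<^sup>2) \<le> 2 / (\<bar>u\<bar> + y)\<^sup>2" if "1 \<le> y"
    proof -
      have "(\<bar>u\<bar> + y)\<^sup>2 \<le> 2 * (u\<^sup>2 + y\<^sup>2)"
        using zero_le_power2[of "\<bar>u\<bar> - y"] by (simp add: power2_eq_square algebra_simps)
      moreover have "0 < (\<bar>u\<bar> + y)\<^sup>2" "0 < u\<^sup>2 + y\<^sup>2"
        using that by (auto intro: add_nonneg_pos)
      ultimately show ?thesis
        by (simp add: divide_simps)
    qed
    then show "ennreal (1 / (u\<^sup>2 + y\<^sup>2)) * indicator {1..} y \<le> ennreal (2 / (\<bar>u\<bar> + y)\<^sup>2) * indicator {1..} y"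
      by (auto simp: indicator_def intro!: ennreal_leI)
  qed
  also have "\<dots> = ennreal (0 - (- 2 / (\<bar>u\<bar> + 1)))"
  proof (rule nn_integral_FTC_atLeast)
    fix y :: real
    assume "1 \<le> y"
    then show "((\<lambda>y. - 2 / (\<bar>u\<bar> + y)) has_real_derivative 2 / (\<bar>u\<bar> + y)\<^sup>2) (at y)"
      by (auto intro!: derivative_eq_intros simp: power2_eq_square)
  next
    show "((\<lambda>y. - 2 / (\<bar>u\<bar> + y)) \<longlongrightarrow> 0) at_top"
      by real_asymp
  qed auto
  finally show ?thesis
    by (simp add: add.commute)
qed

lemma log_mean_Im_Cauchy_tr_finite:
  assumes \<mu>: "\<mu> \<in> Mplus 1"
  shows "log_mean_Im_Cauchy_tr 1 \<mu> < \<infinity>"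
proof -
  have kernel: "- Im (inverse ((\<i> * of_real y + of_real u) powr of_real 1)) / y = 1 / (u\<^sup>2 + y\<^sup>2)"
    if "1 \<le> y" for u y :: real
    using that by (simp add: Im_divide)
  have "log_mean_Im_Cauchy_tr 1 \<mu> = (\<integral>\<^sup>+u. (\<integral>\<^sup>+y\<in>{1..}. ennreal (1 / (u\<^sup>2 + y\<^sup>2)) \<partial>lborel) \<partial>\<mu>)"
    unfolding log_mean_Im_Cauchy_tr_eq[OF \<mu>, simplified]
    by (intro nn_integral_cong) (simp add: kernel indicator_def)
  also have "\<dots> \<le> (\<integral>\<^sup>+u. ennreal 2 * ennreal ((1 + \<bar>u\<bar>) powr (-1)) \<partial>\<mu>)"
  proof (intro nn_integral_mono)
    fix u :: real
    have "ennreal (2 / (1 + \<bar>u\<bar>)) = ennreal 2 * ennreal ((1 + \<bar>u\<bar>) powr (-1))"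
      by (subst ennreal_mult[symmetric]) auto
    then show "(\<integral>\<^sup>+y\<in>{1..}. ennreal (1 / (u\<^sup>2 + y\<^sup>2)) \<partial>lborel) \<le> ennreal 2 * ennreal ((1 + \<bar>u\<bar>) powr (-1))"
      using nn_integral_inverse_sum_squares_le[of u] by simp
  qed
  also have "\<dots> = ennreal 2 * (\<integral>\<^sup>+u. ennreal ((1 + \<bar>u\<bar>) powr (-1)) \<partial>\<mu>)"
    by (rule nn_integral_cmult) (simp add: Mplus_measurable_eq[OF \<mu>])
  also have "\<dots> < \<infinity>"
    using \<mu> by (simp add: Mplus_def ennreal_mult_less_top)
  finally show ?thesis .
qed

lemma sin_ge_min_endpoints:
  assumes "0 \<le> u" "u \<le> x" "x \<le> v" "v \<le> pi"
  shows "min (sin u) (sin v) \<le> sin x"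
proof (cases "x \<le> pi / 2")
  case True
  then have "sin u \<le> sin x"
    using assms by (intro sin_monotone_2pi_le) auto
  then show ?thesis
    by simp
next
  case False
  then have "sin (pi - v) \<le> sin (pi - x)"
    using assms by (intro sin_monotone_2pi_le) auto
  then show ?thesis
    by simp
qed

lemma neg_Im_inverse_powr_ge:
  assumes "0 < \<alpha>" "\<alpha> < 1" "t \<le> 0" "1 \<le> y" "y \<le> 1 - t"
  shows "min (sin (\<alpha> * pi / 2)) (sin (\<alpha> * pi)) * (2 * (1 - t)) powr (-\<alpha>)
       \<le> - Im (inverse ((\<i> * of_real y + of_real t) powr of_real \<alpha>))"
proof -
  define w where "w = \<i> * of_real y + of_real t"
  have w: "0 < Im w" "Re w \<le> 0" "w \<noteq> 0"
    using assms by (auto simp: w_def complex_eq_iff)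
  have "pi / 2 \<le> Im (Ln w)" "Im (Ln w) \<le> pi"
    using Re_Ln_pos_lt[OF w(3)] Im_Ln_pos_lt_imp[OF w(1)] w(2) by auto
  then have "min (sin (\<alpha> * pi / 2)) (sin (\<alpha> * pi)) \<le> sin (\<alpha> * Im (Ln w))"
    using assms(1,2) by (intro sin_ge_min_endpoints) (auto simp: mult_left_mono)
  moreover have "norm w \<le> 2 * (1 - t)"
    using cmod_le[of w] assms by (simp add: w_def)
  then have "(2 * (1 - t)) powr (-\<alpha>) \<le> norm w powr (-\<alpha>)"
    using w(3) assms(1) by (intro powr_mono2') auto
  moreover have "0 \<le> min (sin (\<alpha> * pi / 2)) (sin (\<alpha> * pi))"
    using assms(1,2) by (auto intro!: sin_ge_zero)
  ultimately show ?thesis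
    using neg_Im_inverse_powr[OF w(1), of \<alpha>] by (simp add: w_def mult_mono mult.commute)
qed

lemma nn_integral_neg_Im_inverse_powr_ge:
  assumes "0 < \<alpha>" "\<alpha> < 1" "t \<le> 0"
  shows "ennreal (min (sin (\<alpha> * pi / 2)) (sin (\<alpha> * pi)) * (2 * (1 - t)) powr (-\<alpha>) * ln (1 - t))
       \<le> (\<integral>\<^sup>+y\<in>{1..}. ennreal (- Im (inverse ((\<i> * of_real y + of_real t) powr of_real \<alpha>)) / y) \<partial>lborel)"
proof -
  define k where "k = min (sin (\<alpha> * pi / 2)) (sin (\<alpha> * pi)) * (2 * (1 - t)) powr (-\<alpha>)"
  have "0 \<le> k"
    unfolding k_def using assms(1,2) by (intro mult_nonneg_nonneg) (auto intro!: sin_ge_zero)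
  have "ennreal (k * ln (1 - t)) = ennreal k * ennreal (ln (1 - t))"
    using \<open>0 \<le> k\<close> assms(3) by (simp add: ennreal_mult)
  also have "ennreal (ln (1 - t)) = (\<integral>\<^sup>+y\<in>{1..1 - t}. ennreal (1 / y) \<partial>lborel)"
    using assms(3) by (subst nn_integral_FTC_Icc[where F = ln]) (auto intro!: derivative_eq_intros)
  also have "ennreal k * \<dots> = (\<integral>\<^sup>+y\<in>{1..1 - t}. ennreal (k / y) \<partial>lborel)"
    using \<open>0 \<le> k\<close>
    by (subst nn_integral_cmult[symmetric]) (auto intro!: nn_integral_cong simp: indicator_def ennreal_mult[symmetric])
  also have "\<dots> \<le> (\<integral>\<^sup>+y\<in>{1..}. ennreal (- Im (inverse ((\<i> * of_real y + of_real t) powr of_real \<alpha>)) / y) \<partial>lborel)"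
  proof (intro nn_integral_mono)
    fix y :: real
    show "ennreal (k / y) * indicator {1..1 - t} y
        \<le> ennreal (- Im (inverse ((\<i> * of_real y + of_real t) powr of_real \<alpha>)) / y) * indicator {1..} y"
    proof (cases "1 \<le> y \<and> y \<le> 1 - t")
      case y: True
      then have "k / y \<le> - Im (inverse ((\<i> * of_real y + of_real t) powr of_real \<alpha>)) / y"
        using neg_Im_inverse_powr_ge[OF assms, of y] by (intro divide_right_mono) (auto simp: k_def)
      moreover have "indicator {1..1 - t} y = (1::ennreal)" "indicator {1..} y = (1::ennreal)"
        using y by auto
      ultimately show ?thesis
        by (simp only: mult_1_right ennreal_leI)
    qed (auto simp: indicator_def)
  qed
  finally show ?thesis
    by (simp add: k_def)
qed

lemma left_log_moment_le_log_mean_Im_Cauchy_tr: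
  assumes "0 < \<alpha>" "\<alpha> < 1" and \<nu>: "\<nu> \<in> Mplus \<alpha>"
  obtains c where "0 < c" "ennreal c * left_log_moment \<alpha> \<nu> \<le> log_mean_Im_Cauchy_tr \<alpha> \<nu>"
proof
  define s where "s = min (sin (\<alpha> * pi / 2)) (sin (\<alpha> * pi))"
  have "0 < s"
    using assms(1,2) by (auto simp: s_def intro!: sin_gt_zero)
  then show "0 < s * 2 powr (-\<alpha>)"
    by simp
  have "ennreal (s * 2 powr (-\<alpha>)) * (indicator {..0} t * ennreal (ln (\<bar>t\<bar> + 1) / (1 + \<bar>t\<bar>) powr \<alpha>))
      \<le> (\<integral>\<^sup>+y\<in>{1..}. ennreal (- Im (inverse ((\<i> * of_real y + of_real t) powr of_real \<alpha>)) / y) \<partial>lborel)"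
    for t :: real
  proof (cases "t \<le> 0")
    case True
    have "s * 2 powr (-\<alpha>) * (ln (\<bar>t\<bar> + 1) / (1 + \<bar>t\<bar>) powr \<alpha>) = s * (2 * (1 - t)) powr (-\<alpha>) * ln (1 - t)"
      using True by (subst powr_mult) (simp_all add: powr_minus divide_inverse add.commute)
    then show ?thesis
      using nn_integral_neg_Im_inverse_powr_ge[OF assms(1,2) True] True \<open>0 < s\<close>
      by (simp add: s_def ennreal_mult[symmetric])
  qed simp
  then have "ennreal (s * 2 powr (-\<alpha>)) * left_log_moment \<alpha> \<nu>
      \<le> (\<integral>\<^sup>+t. (\<integral>\<^sup>+y\<in>{1..}. ennreal (- Im (inverse ((\<i> * of_real y + of_real t) powr of_real \<alpha>)) / y) \<partial>lborel) \<partial>\<nu>)"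
    unfolding left_log_moment_def
    by (subst nn_integral_cmult[symmetric]) (auto simp: Mplus_measurable_eq[OF \<nu>] intro!: nn_integral_mono)
  then show "ennreal (s * 2 powr (-\<alpha>)) * left_log_moment \<alpha> \<nu> \<le> log_mean_Im_Cauchy_tr \<alpha> \<nu>"
    using log_mean_Im_Cauchy_tr_eq[OF \<nu>] assms(1,2) by simp
qed

lemma left_log_moment_finite_if_Cauchy_tr_eq:
  assumes "0 < \<alpha>" "\<alpha> < 1" "\<nu> \<in> Mplus \<alpha>" "\<mu> \<in> Mplus 1"
    and eq: "\<And>z. 0 < Im z \<Longrightarrow> Cauchy_tr \<alpha> \<nu> z = Cauchy_tr 1 \<mu> z"
  shows "left_log_moment \<alpha> \<nu> < \<infinity>"
proof -
  obtain c where "0 < c" and c: "ennreal c * left_log_moment \<alpha> \<nu> \<le> log_mean_Im_Cauchy_tr \<alpha> \<nu>"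
    using left_log_moment_le_log_mean_Im_Cauchy_tr assms(1-3) by blast
  have "log_mean_Im_Cauchy_tr \<alpha> \<nu> = log_mean_Im_Cauchy_tr 1 \<mu>"
    unfolding log_mean_Im_Cauchy_tr_def by (intro nn_integral_cong) (simp add: eq indicator_def)
  then have "ennreal c * left_log_moment \<alpha> \<nu> < \<infinity>"
    using c log_mean_Im_Cauchy_tr_finite[OF assms(4)] by simp
  then show ?thesis
    using \<open>0 < c\<close> by (auto simp: ennreal_mult_less_top)
qed

section \<open>Subordination of \<open>w\<^sup>-\<^sup>\<alpha>\<close> to the Cauchy kernel\<close>

lemma nn_integral_powr_tail:
  assumes "1 < p" "0 < a"
  shows "(\<integral>\<^sup>+x\<in>{a..}. ennreal (x powr (-p)) \<partial>lborel) = ennreal (a powr (1 - p) / (p - 1))"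
proof -
  have "(\<integral>\<^sup>+x\<in>{a..}. ennreal (x powr (-p)) \<partial>lborel) = 0 - a powr (1 - p) / (1 - p)"
  proof (rule nn_integral_FTC_atLeast)
    fix x :: real
    assume "a \<le> x"
    then show "((\<lambda>x. x powr (1 - p) / (1 - p)) has_real_derivative x powr (-p)) (at x)"
      using assms by (auto intro!: derivative_eq_intros)
  next
    have "((\<lambda>x. x powr (1 - p)) \<longlongrightarrow> 0) at_top"
      using assms by (intro tendsto_neg_powr filterlim_ident) auto
    then show "((\<lambda>x. x powr (1 - p) / (1 - p)) \<longlongrightarrow> 0) at_top"
      by (rule tendsto_divide_zero)
  qed auto
  then show ?thesis
    using assms by (simp add: field_simps)
qed

definition subord_const :: "real \<Rightarrow> real" where
  "subord_const p = enn2real (\<integral>\<^sup>+x\<in>{0..}. ennreal (1 / (1 + x powr p)) \<partial>lborel)"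

lemma nn_integral_subord_const:
  assumes "1 < p"
  shows "(\<integral>\<^sup>+x\<in>{0..}. ennreal (1 / (1 + x powr p)) \<partial>lborel) = ennreal (subord_const p)"
proof -
  have "(\<integral>\<^sup>+x\<in>{0..}. ennreal (1 / (1 + x powr p)) \<partial>lborel)
      \<le> (\<integral>\<^sup>+x. indicator {0..1} x + ennreal (x powr (-p)) * indicator {1..} x \<partial>lborel)"
  proof (intro nn_integral_mono)
    fix x :: real
    show "ennreal (1 / (1 + x powr p)) * indicator {0..} x
        \<le> indicator {0..1} x + ennreal (x powr (-p)) * indicator {1..} x"
    proof (cases "x \<le> 1")
      case True
      then have "ennreal (1 / (1 + x powr p)) * indicator {0..} x \<le> indicator {0..1} x"
        by (auto simp: indicator_def ennreal_le_1 add_pos_nonneg)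
      then show ?thesis
        by (intro add_increasing2) auto
    next
      case False
      then have "1 / (1 + x powr p) \<le> x powr (-p)"
        by (simp add: powr_minus_divide divide_left_mono add_pos_nonneg)
      then show ?thesis
        using False by (auto simp: indicator_def intro: ennreal_leI)
    qed
  qed
  also have "\<dots> = 1 + ennreal (1 / (p - 1))"
    using assms by (subst nn_integral_add) (auto simp: nn_integral_powr_tail)
  also have "\<dots> < \<infinity>"
    by simp
  finally show ?thesis
    by (simp add: subord_const_def less_top)
qed

lemma subord_const_pos:
  assumes "1 < p"
  shows "0 < subord_const p"
proof -
  have "(\<integral>\<^sup>+x\<in>{0..1::real}. ennreal (1 / 2) \<partial>lborel) = ennreal (1 / 2)"
    by (subst nn_integral_cmult_indicator) auto
  then have "ennreal (1 / 2) = (\<integral>\<^sup>+x\<in>{0..1::real}. ennreal (1 / 2) \<partial>lborel)"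
    by simp
  also have "\<dots> \<le> (\<integral>\<^sup>+x\<in>{0..}. ennreal (1 / (1 + x powr p)) \<partial>lborel)"
  proof (intro nn_integral_mono)
    fix x :: real
    show "ennreal (1 / 2) * indicator {0..1} x \<le> ennreal (1 / (1 + x powr p)) * indicator {0..} x"
    proof (cases "0 \<le> x \<and> x \<le> 1")
      case True
      then have "1 / 2 \<le> 1 / (1 + x powr p)"
        using assms by (simp add: powr_le1 divide_simps add_pos_nonneg)
      then have "ennreal (1 / 2) \<le> ennreal (1 / (1 + x powr p))"
        by (rule ennreal_leI)
      with True show ?thesis
        by (simp add: indicator_def)
    qed auto
  qed
  finally have "ennreal (1 / 2) \<le> ennreal (subord_const p)"
    unfolding nn_integral_subord_const[OF assms] .
  then have "1 / 2 \<le> subord_const p"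
    by (rule ennreal_le_iff[THEN iffD1, rotated]) (simp add: subord_const_def)
  then show ?thesis
    by simp
qed

lemma nn_integral_subord_scale:
  assumes p: "1 < p" and w: "0 < w"
  shows "(\<integral>\<^sup>+x\<in>{0..}. ennreal (1 / (w + x powr p)) \<partial>lborel)
       = ennreal (w powr (1 / p - 1) * subord_const p)"
proof -
  define c where "c = w powr (1 / p)"
  have "0 < c"
    using w by (simp add: c_def)
  have "c * (1 / (w + (c * x) powr p)) = w powr (1 / p - 1) * (1 / (1 + x powr p))" if "0 \<le> x" for x
  proof -
    have "(c * x) powr p = w * x powr p"
      using that p w by (simp add: c_def powr_mult[of "w powr (1 / p)" x p] powr_powr)
    then have "w + (c * x) powr p = w * (1 + x powr p)"
      by (simp add: algebra_simps)
    moreover have "w powr (1 / p - 1) = c / w"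
      using w by (simp add: c_def powr_diff)
    ultimately show ?thesis
      by simp
  qed
  then have eq: "ennreal c * (ennreal (1 / (w + (c * x) powr p)) * indicator {0..} (c * x))
      = ennreal (w powr (1 / p - 1)) * (ennreal (1 / (1 + x powr p)) * indicator {0..} x)" for x
    using \<open>0 < c\<close> w
    by (cases "0 \<le> x") (auto simp: ennreal_mult[symmetric] zero_le_mult_iff add_pos_nonneg)
  have "(\<integral>\<^sup>+x\<in>{0..}. ennreal (1 / (w + x powr p)) \<partial>lborel)
      = ennreal \<bar>c\<bar> * (\<integral>\<^sup>+x. ennreal (1 / (w + (0 + c * x) powr p)) * indicator {0..} (0 + c * x) \<partial>lborel)"
    using \<open>0 < c\<close> by (intro nn_integral_real_affine) auto
  also have "\<dots> = ennreal c * (\<integral>\<^sup>+x. ennreal (1 / (w + (c * x) powr p)) * indicator {0..} (c * x) \<partial>lborel)"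
    using \<open>0 < c\<close> by simp
  also have "\<dots> = (\<integral>\<^sup>+x\<in>{0..}. ennreal (w powr (1 / p - 1)) * ennreal (1 / (1 + x powr p)) \<partial>lborel)"
    by (subst nn_integral_cmult[symmetric]) (simp_all add: eq mult.assoc)
  also have "\<dots> = ennreal (w powr (1 / p - 1) * subord_const p)"
    using p by (simp add: nn_integral_cmult mult.assoc nn_integral_subord_const ennreal_mult')
  finally show ?thesis .
qed

lemma slit_plane_norm_add_of_real_ge:
  fixes w :: complex
  assumes w: "w \<notin> \<real>\<^sub>\<le>\<^sub>0"
  obtains c where "0 < c" "\<And>r. 0 \<le> r \<Longrightarrow> c * (1 + r) \<le> norm (w + of_real r)"
proof -
  define d where "d = infdist w \<real>\<^sub>\<le>\<^sub>0"
  have "\<real>\<^sub>\<le>\<^sub>0 \<noteq> ({} :: complex set)"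
    using nonpos_Reals_zero_I by blast
  then have "0 < d"
    unfolding d_def using w by (intro infdist_pos_not_in_closed) auto
  have d: "d \<le> norm (w + of_real r)" if "0 \<le> r" for r
  proof -
    have "d \<le> dist w (of_real (- r))"
      unfolding d_def using that by (intro infdist_le) auto
    then show ?thesis
      by (simp add: dist_norm)
  qed
  define c where "c = min d (1 / 2) / (2 + 2 * norm w)"
  have "0 < c"
    using \<open>0 < d\<close> by (simp add: c_def add_pos_nonneg)
  moreover have "c * (1 + r) \<le> norm (w + of_real r)" if "0 \<le> r" for r
  proof (cases "r \<le> 1 + 2 * norm w")
    case True
    then have "c * (1 + r) \<le> c * (2 + 2 * norm w)"
      using \<open>0 < c\<close> by (intro mult_left_mono) auto
    also have "\<dots> = min d (1 / 2)"
      using norm_ge_zero[of w] unfolding c_def by (simp del: norm_ge_zero)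
    finally show ?thesis
      using d[OF that] by linarith
  next
    case False
    have "c \<le> 1 / 4"
      using norm_ge_zero[of w] unfolding c_def by (auto simp: divide_simps min_def simp del: norm_ge_zero)
    then have "c * (1 + r) \<le> (1 + r) / 4"
      using mult_right_mono[of c "1 / 4" "1 + r"] that by simp
    also have "\<dots> \<le> r - norm w"
      using False norm_ge_zero[of w] by (simp add: field_simps del: norm_ge_zero)
    also have "\<dots> \<le> norm (w + of_real r)"
      using norm_diff_ineq[of "of_real r" w] that by (simp add: add.commute)
    finally show ?thesis .
  qed
  ultimately show ?thesis
    using that by blast
qed

definition subord_integral :: "real \<Rightarrow> complex \<Rightarrow> complex" where
  "subord_integral p w = (LINT x:{0..}|lborel. 1 / (w + of_real (x powr p)))"

lemma subord_integrable:
  fixes w :: complex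
  assumes p: "1 < p" and w: "w \<notin> \<real>\<^sub>\<le>\<^sub>0"
  shows "set_integrable lborel {0..} (\<lambda>x. 1 / (w + of_real (x powr p)))"
proof -
  obtain c where "0 < c" and c: "\<And>r. 0 \<le> r \<Longrightarrow> c * (1 + r) \<le> norm (w + of_real r)"
    using slit_plane_norm_add_of_real_ge[OF w] by blast
  have "norm (1 / (w + of_real (x powr p))) \<le> 1 / c * (1 / (1 + x powr p))" for x
    using c[of "x powr p"] \<open>0 < c\<close> by (simp add: norm_divide divide_simps add_pos_nonneg)
  then have "(\<integral>\<^sup>+x. ennreal (norm (indicator {0..} x *\<^sub>R (1 / (w + of_real (x powr p))))) \<partial>lborel)
      \<le> (\<integral>\<^sup>+x\<in>{0..}. ennreal (1 / c) * ennreal (1 / (1 + x powr p)) \<partial>lborel)"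
    using \<open>0 < c\<close> by (intro nn_integral_mono) (auto simp: indicator_def ennreal_mult[symmetric] intro: ennreal_leI)
  also have "\<dots> = ennreal (1 / c) * ennreal (subord_const p)"
    by (simp add: nn_integral_cmult mult.assoc nn_integral_subord_const[OF p])
  also have "\<dots> < \<infinity>"
    by (simp add: ennreal_mult_less_top)
  finally show ?thesis
    unfolding set_integrable_def by (intro integrableI_bounded) auto
qed

lemma holomorphic_on_subord_integral_Icc:
  fixes U :: "complex set"
  assumes "0 < p" "convex U" "U \<subseteq> - \<real>\<^sub>\<le>\<^sub>0"
  shows "(\<lambda>w. integral {0..b} (\<lambda>x. 1 / (w + of_real (x powr p)))) holomorphic_on U"
proof -
  have nz: "w + of_real (x powr p) \<noteq> 0" if "w \<in> U" for w x
  proof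
    assume "w + of_real (x powr p) = 0"
    then have "w = of_real (- (x powr p))"
      by (simp add: add_eq_0_iff)
    then have "w \<in> \<real>\<^sub>\<le>\<^sub>0"
      by simp
    then show False
      using that assms(3) by auto
  qed
  have cont_powr: "continuous_on {0..b} (\<lambda>x. (x::real) powr p)"
    using \<open>0 < p\<close> by (intro continuous_on_powr' continuous_intros) auto
  have "(\<lambda>w. integral (cbox 0 b) (\<lambda>x. 1 / (w + of_real (x powr p)))) holomorphic_on U"
  proof (rule leibniz_rule_holomorphic[where fx = "\<lambda>w x. - 1 / (w + of_real (x powr p))\<^sup>2"])
    fix w and x :: real
    assume "w \<in> U"
    then show "((\<lambda>w. 1 / (w + of_real (x powr p))) has_field_derivative - 1 / (w + of_real (x powr p))\<^sup>2)
        (at w within U)"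
      using nz by (auto intro!: derivative_eq_intros simp: power2_eq_square divide_simps)
  next
    fix w
    assume "w \<in> U"
    then show "(\<lambda>x. 1 / (w + of_real (x powr p))) integrable_on cbox 0 b"
      using nz by (intro integrable_continuous continuous_intros continuous_on_compose2[OF cont_powr]) auto
  next
    show "continuous_on (U \<times> cbox 0 b) (\<lambda>(w, x). - 1 / (w + of_real (x powr p))\<^sup>2)"
      using nz unfolding case_prod_unfold
      by (intro continuous_intros continuous_on_compose2[OF cont_powr]) auto
  qed (rule assms(2))
  then show ?thesis
    by simp
qed

lemma subord_integral_tail_bound:
  fixes w :: complex
  assumes p: "1 < p" and w: "w \<notin> \<real>\<^sub>\<le>\<^sub>0" and n: "1 \<le> n" and nw: "2 * norm w \<le> n powr p"
  shows "norm (subord_integral p w - integral {0..n} (\<lambda>x. 1 / (w + of_real (x powr p))))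
       \<le> 2 * (n powr (1 - p) / (p - 1))"
proof -
  let ?f = "\<lambda>x. 1 / (w + of_real (x powr p))"
  have int: "set_integrable lborel {0..n} ?f" "set_integrable lborel {n<..} ?f"
    using subord_integrable[OF p w] n by (auto elim!: set_integrable_subset)
  have "{0..} = {0..n} \<union> {n<..}"
    using n by auto
  then have "subord_integral p w = (LINT x:{0..n} \<union> {n<..}|lborel. ?f x)"
    unfolding subord_integral_def by simp
  also have "\<dots> = (LINT x:{0..n}|lborel. ?f x) + (LINT x:{n<..}|lborel. ?f x)"
    by (intro set_integral_Un int) auto
  finally have diff: "subord_integral p w - integral {0..n} ?f = (LINT x:{n<..}|lborel. ?f x)"
    using set_borel_integral_eq_integral(2)[OF int(1)] by simp
  have "norm (?f x) \<le> 2 * x powr (-p)" if "n < x" for x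
  proof -
    have "n powr p \<le> x powr p"
      using that n p by (intro powr_mono2) auto
    moreover have "x powr p - norm w \<le> norm (w + of_real (x powr p))"
      using norm_diff_ineq[of "of_real (x powr p)" w] by (simp add: add.commute)
    ultimately have "x powr p / 2 \<le> norm (w + of_real (x powr p))"
      using nw by simp
    moreover have "0 < x powr p"
      using that n by simp
    ultimately show ?thesis
      by (simp add: norm_divide powr_minus divide_simps)
  qed
  then have "ennreal (norm (LINT x:{n<..}|lborel. ?f x)) \<le> (\<integral>\<^sup>+x\<in>{n..}. ennreal (2 * x powr (-p)) \<partial>lborel)"
    using int(2) unfolding set_lebesgue_integral_def set_integrable_def
    by (intro order_trans[OF integral_norm_bound_ennreal] nn_integral_mono)
       (auto simp: indicator_def intro!: ennreal_leI)
  also have "\<dots> = ennreal 2 * (\<integral>\<^sup>+x\<in>{n..}. ennreal (x powr (-p)) \<partial>lborel)"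
    by (subst nn_integral_cmult[symmetric]) (auto intro!: nn_integral_cong simp: ennreal_mult mult.assoc)
  also have "\<dots> = ennreal (2 * (n powr (1 - p) / (p - 1)))"
    using p n by (subst ennreal_mult) (auto simp: nn_integral_powr_tail)
  finally show ?thesis
    unfolding diff using p by (subst (asm) ennreal_le_iff) auto
qed

lemma uniform_limit_subord_integral_Icc:
  fixes K :: "complex set"
  assumes p: "1 < p" and K: "bounded K" "K \<subseteq> - \<real>\<^sub>\<le>\<^sub>0"
  shows "uniform_limit K (\<lambda>n w. integral {0..real n} (\<lambda>x. 1 / (w + of_real (x powr p))))
           (subord_integral p) sequentially"
proof (rule uniform_limitI)
  fix e :: real
  assume "0 < e"
  obtain R where R: "\<And>w. w \<in> K \<Longrightarrow> norm w \<le> R"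
    using K(1) bounded_iff by blast
  have "((\<lambda>n. 2 * (real n powr (1 - p) / (p - 1))) \<longlongrightarrow> 2 * (0 / (p - 1))) sequentially"
    using p by (intro tendsto_intros tendsto_neg_powr filterlim_real_sequentially) auto
  then have "eventually (\<lambda>n. 2 * (real n powr (1 - p) / (p - 1)) < e) sequentially"
    using \<open>0 < e\<close> by (intro order_tendstoD(2)) auto
  moreover have "eventually (\<lambda>n. max 1 ((2 * R) powr (1 / p)) \<le> real n) sequentially"
    using filterlim_real_sequentially unfolding filterlim_at_top by blast
  ultimately show "eventually (\<lambda>n. \<forall>w\<in>K. dist (integral {0..real n} (\<lambda>x. 1 / (w + of_real (x powr p))))
      (subord_integral p w) < e) sequentially"
  proof eventually_elim
    case (elim n)
    show ?case
    proof
      fix w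
      assume "w \<in> K"
      have "(2 * R) powr (1 / p) \<le> real n"
        using elim(2) by simp
      then have "((2 * R) powr (1 / p)) powr p \<le> real n powr p"
        using p by (intro powr_mono2) auto
      moreover have "((2 * R) powr (1 / p)) powr p = 2 * R"
        using p R[OF \<open>w \<in> K\<close>] norm_ge_zero[of w] by (simp add: powr_powr del: norm_ge_zero)
      ultimately have "2 * norm w \<le> real n powr p"
        using R[OF \<open>w \<in> K\<close>] by simp
      then have "norm (subord_integral p w - integral {0..real n} (\<lambda>x. 1 / (w + of_real (x powr p))))
          \<le> 2 * (real n powr (1 - p) / (p - 1))"
        using elim(2) \<open>w \<in> K\<close> K(2) by (intro subord_integral_tail_bound[OF p]) auto
      then show "dist (integral {0..real n} (\<lambda>x. 1 / (w + of_real (x powr p)))) (subord_integral p w) < e"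
        using elim(1) by (simp add: dist_norm norm_minus_commute)
    qed
  qed
qed

lemma subord_integral_holomorphic:
  assumes p: "1 < p"
  shows "subord_integral p holomorphic_on - \<real>\<^sub>\<le>\<^sub>0"
proof -
  have "\<exists>r>0. subord_integral p holomorphic_on ball z r" if "z \<in> - \<real>\<^sub>\<le>\<^sub>0" for z
  proof -
    obtain r where "0 < r" and r: "cball z r \<subseteq> - \<real>\<^sub>\<le>\<^sub>0"
      using \<open>z \<in> - \<real>\<^sub>\<le>\<^sub>0\<close> open_contains_cball[of "- \<real>\<^sub>\<le>\<^sub>0"] by (auto simp: open_Compl)
    have "(\<lambda>w. integral {0..real n} (\<lambda>x. 1 / (w + of_real (x powr p)))) holomorphic_on cball z r" for n
      using p r by (intro holomorphic_on_subord_integral_Icc) auto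
    then have ev: "eventually (\<lambda>n. continuous_on (cball z r) (\<lambda>w. integral {0..real n} (\<lambda>x. 1 / (w + of_real (x powr p))))
        \<and> (\<lambda>w. integral {0..real n} (\<lambda>x. 1 / (w + of_real (x powr p)))) holomorphic_on ball z r) sequentially"
      by (intro always_eventually allI conjI holomorphic_on_imp_continuous_on)
         (auto intro: holomorphic_on_subset[OF _ ball_subset_cball])
    obtain "subord_integral p holomorphic_on ball z r"
      using holomorphic_uniform_limit[OF ev uniform_limit_subord_integral_Icc[OF p bounded_cball r]
          trivial_limit_sequentially] .
    then show ?thesis
      using \<open>0 < r\<close> by blast
  qed
  then have "subord_integral p analytic_on - \<real>\<^sub>\<le>\<^sub>0"
    unfolding analytic_on_def by blast
  then show ?thesis
    by (rule analytic_imp_holomorphic)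
qed

lemma subord_integral_of_real:
  assumes p: "1 < p" and r: "0 < r"
  shows "subord_integral p (of_real r) = of_real (r powr (1 / p - 1) * subord_const p)"
proof -
  have "subord_integral p (of_real r) = (\<integral>x. of_real (indicator {0..} x * (1 / (r + x powr p))) \<partial>lborel)"
    unfolding subord_integral_def set_lebesgue_integral_def
    by (intro Bochner_Integration.integral_cong) (auto simp: indicator_def)
  also have "\<dots> = of_real (\<integral>x. indicator {0..} x * (1 / (r + x powr p)) \<partial>lborel)"
    by (rule integral_complex_of_real)
  also have "(\<integral>x. indicator {0..} x * (1 / (r + x powr p)) \<partial>lborel)
      = enn2real (\<integral>\<^sup>+x\<in>{0..}. ennreal (1 / (r + x powr p)) \<partial>lborel)"
    using r by (subst integral_eq_nn_integral)
      (auto simp: indicator_def add_pos_nonneg intro!: arg_cong[where f = enn2real] nn_integral_cong)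
  also have "\<dots> = r powr (1 / p - 1) * subord_const p"
    using subord_const_pos[OF p] by (simp add: nn_integral_subord_scale[OF p r])
  finally show ?thesis .
qed

lemma subord_integral_eq:
  assumes p: "1 < p" and w: "w \<notin> \<real>\<^sub>\<le>\<^sub>0"
  shows "subord_integral p w = of_real (subord_const p) * w powr of_real (1 / p - 1)"
proof -
  let ?g = "\<lambda>w. subord_integral p w - of_real (subord_const p) * w powr of_real (1 / p - 1)"
  have limpt: "1 islimpt (of_real ` {0<..} :: complex set)"
    unfolding islimpt_approachable
  proof (intro allI impI)
    fix e :: real
    assume "0 < e"
    show "\<exists>x'\<in>(of_real ` {0<..} :: complex set). x' \<noteq> 1 \<and> dist x' 1 < e"
    proof (rule bexI[of _ "complex_of_real (1 + e / 2)"])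
      show "complex_of_real (1 + e / 2) \<in> of_real ` {0<..}"
        using \<open>0 < e\<close> by (intro imageI) simp
      have "dist (complex_of_real (1 + e / 2)) 1 = e / 2"
        using \<open>0 < e\<close> by (simp add: dist_norm)
      then show "complex_of_real (1 + e / 2) \<noteq> 1 \<and> dist (complex_of_real (1 + e / 2)) 1 < e"
        using \<open>0 < e\<close> by auto
    qed
  qed
  have "(\<real>\<^sub>\<le>\<^sub>0 :: complex set) = of_real ` {..0}"
    by (auto simp: nonpos_Reals_def)
  then have conn: "connected (- \<real>\<^sub>\<le>\<^sub>0 :: complex set)"
    using starlike_slotted_complex_plane_left[of 0] by (simp add: starlike_imp_connected)
  have holo: "?g holomorphic_on - \<real>\<^sub>\<le>\<^sub>0"
    by (intro holomorphic_intros subord_integral_holomorphic[OF p]) auto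
  have "?g (of_real r) = 0" if "0 < r" for r
    using that subord_integral_of_real[OF p that] powr_of_real[of r "1 / p - 1"] by simp
  then have zero: "?g z = 0" if "z \<in> of_real ` {0<..}" for z
    using that by (auto simp only: image_iff greaterThan_iff)
  have "?g w = 0"
    by (rule analytic_continuation[OF holo _ conn _ _ limpt zero]) (use w in \<open>auto simp: open_Compl\<close>)
  then show ?thesis
    by simp
qed

lemma subord_kernel_integral:
  fixes w :: complex
  assumes p: "1 < p" and w: "w \<notin> \<real>\<^sub>\<le>\<^sub>0"
  shows "(\<integral>x. (indicator {0..} x / subord_const p) *\<^sub>R inverse (w + of_real (x powr p)) \<partial>lborel)
       = inverse (w powr of_real (1 - 1 / p))"
proof -
  have "(\<integral>x. (indicator {0..} x / subord_const p) *\<^sub>R inverse (w + of_real (x powr p)) \<partial>lborel)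
      = (1 / subord_const p) *\<^sub>R subord_integral p w"
    unfolding subord_integral_def set_lebesgue_integral_def
    by (simp add: divide_inverse integral_scaleR_right[symmetric] mult.commute)
  also have "\<dots> = w powr of_real (- (1 - 1 / p))"
    using subord_integral_eq[OF p w] subord_const_pos[OF p] by (simp add: scaleR_conv_of_real)
  also have "\<dots> = inverse (w powr of_real (1 - 1 / p))"
    by (simp only: of_real_minus powr_minus)
  finally show ?thesis .
qed

section \<open>The weight \<open>G\<close> of the subordinated measure\<close>

definition subord_weight :: "real \<Rightarrow> real \<Rightarrow> ennreal" where
  "subord_weight p t = (\<integral>\<^sup>+x\<in>{0..}. ennreal (1 / (1 + \<bar>t + x powr p\<bar>)) \<partial>lborel)"

lemma subord_weight_nonneg:
  assumes "1 < p" "0 \<le> t"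
  shows "subord_weight p t = ennreal ((1 + t) powr (1 / p - 1) * subord_const p)"
proof -
  have "subord_weight p t = (\<integral>\<^sup>+x\<in>{0..}. ennreal (1 / ((1 + t) + x powr p)) \<partial>lborel)"
    unfolding subord_weight_def using assms(2) by (intro nn_integral_cong) (simp add: add.assoc)
  also have "\<dots> = ennreal ((1 + t) powr (1 / p - 1) * subord_const p)"
    using assms by (intro nn_integral_subord_scale) auto
  finally show ?thesis .
qed

lemma subord_weight_le_const:
  assumes "1 < p" "-1 \<le> t"
  shows "subord_weight p t \<le> ennreal (2 * subord_const p)"
proof -
  have "1 / (1 + \<bar>t + x powr p\<bar>) \<le> 2 * (1 / (1 + x powr p))" for x
  proof -
    have "1 + X \<le> 2 * (1 + \<bar>t + X\<bar>)" if "0 \<le> X" for X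
      using assms(2) that by (simp add: abs_if)
    then have "1 + x powr p \<le> 2 * (1 + \<bar>t + x powr p\<bar>)"
      by simp
    then show ?thesis
      by (simp add: divide_simps add_pos_nonneg)
  qed
  then have "subord_weight p t \<le> (\<integral>\<^sup>+x\<in>{0..}. ennreal 2 * ennreal (1 / (1 + x powr p)) \<partial>lborel)"
    unfolding subord_weight_def
    by (intro nn_integral_mono mult_right_mono, subst ennreal_mult[symmetric]) (auto intro!: ennreal_leI)
  also have "\<dots> = ennreal 2 * (\<integral>\<^sup>+x\<in>{0..}. ennreal (1 / (1 + x powr p)) \<partial>lborel)"
    by (simp add: nn_integral_cmult mult.assoc)
  also have "\<dots> = ennreal (2 * subord_const p)"
    using assms(1) subord_const_pos[OF assms(1)] by (subst ennreal_mult) (auto simp: nn_integral_subord_const)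
  finally show ?thesis .
qed

lemma subord_weight_le_ge_neg_one:
  assumes p: "1 < p" and t: "-1 \<le> t"
  shows "subord_weight p t \<le> ennreal (4 * subord_const p * (1 + \<bar>t\<bar>) powr (1 / p - 1))"
proof (cases "0 \<le> t")
  case True
  then show ?thesis
    using p subord_const_pos[OF p] by (simp add: subord_weight_nonneg ennreal_leI)
next
  case False
  have "1 / 2 \<le> 2 powr (1 / p - 1)"
    using p powr_mono[of "-1" "1 / p - 1" 2] by (simp add: powr_minus)
  also have "\<dots> \<le> (1 + \<bar>t\<bar>) powr (1 / p - 1)"
    using p t False by (intro powr_mono2') auto
  finally have "2 * subord_const p \<le> 4 * subord_const p * (1 + \<bar>t\<bar>) powr (1 / p - 1)"
    using subord_const_pos[OF p] mult_left_mono[of "1 / 2" _ "4 * subord_const p"] by simp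
  then show ?thesis
    using order_trans[OF subord_weight_le_const[OF p t] ennreal_leI] by blast
qed

lemma powr_diff_lower_bound:
  fixes p a x :: real
  assumes p: "1 \<le> p" and a: "0 < a" and x: "a / 2 \<le> x"
  shows "(a / 2) powr (p - 1) * \<bar>x - a\<bar> \<le> \<bar>x powr p - a powr p\<bar>"
proof -
  have deriv: "DERIV (\<lambda>y. y powr p) y :> p * y powr (p - 1)" if "0 < y" for y
    using that by (auto intro!: derivative_eq_intros)
  have slope: "(a / 2) powr (p - 1) \<le> p * z powr (p - 1)" if "a / 2 \<le> z" for z
  proof -
    have "(a / 2) powr (p - 1) \<le> z powr (p - 1)"
      using that a p by (intro powr_mono2) auto
    also have "\<dots> \<le> p * z powr (p - 1)"
      using p by (simp add: mult_le_cancel_right1)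
    finally show ?thesis .
  qed
  consider "x < a" | "x = a" | "a < x"
    by linarith
  then show ?thesis
  proof cases
    case 1
    obtain z where z: "x < z" "z < a" "a powr p - x powr p = (a - x) * (p * z powr (p - 1))"
      using MVT2[OF 1, of "\<lambda>y. y powr p" "\<lambda>y. p * y powr (p - 1)"] deriv x a by force
    have "(a / 2) powr (p - 1) * (a - x) \<le> (p * z powr (p - 1)) * (a - x)"
      using slope[of z] z x 1 by (intro mult_right_mono) auto
    then show ?thesis
      using z 1 by (simp add: abs_if algebra_simps)
  next
    case 3
    obtain z where z: "a < z" "z < x" "x powr p - a powr p = (x - a) * (p * z powr (p - 1))"
      using MVT2[OF 3, of "\<lambda>y. y powr p" "\<lambda>y. p * y powr (p - 1)"] deriv a by force
    have "(a / 2) powr (p - 1) * (x - a) \<le> (p * z powr (p - 1)) * (x - a)"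
      using slope[of z] z a 3 by (intro mult_right_mono) auto
    then show ?thesis
      using z 3 by (simp add: abs_if algebra_simps)
  qed simp
qed

lemma nn_integral_inverse_one_plus_abs_le:
  assumes b: "0 < b" and a: "0 \<le> a"
  shows "(\<integral>\<^sup>+x\<in>{0..2 * a}. ennreal (1 / (1 + b * \<bar>x - a\<bar>)) \<partial>lborel) \<le> ennreal (2 * (ln (1 + a * b) / b))"
proof -
  have "(\<integral>\<^sup>+x\<in>{0..a}. ennreal (1 / (1 + b * (a - x))) \<partial>lborel)
      = ennreal (- ln (1 + b * (a - a)) / b - - ln (1 + b * (a - 0)) / b)"
    using a b by (intro nn_integral_FTC_Icc) (auto intro!: derivative_eq_intros simp: add_pos_nonneg)
  then have left: "(\<integral>\<^sup>+x\<in>{0..a}. ennreal (1 / (1 + b * (a - x))) \<partial>lborel) = ennreal (ln (1 + a * b) / b)"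
    by (simp add: mult.commute)
  have "(\<integral>\<^sup>+x\<in>{a..2 * a}. ennreal (1 / (1 + b * (x - a))) \<partial>lborel)
      = ennreal (ln (1 + b * (2 * a - a)) / b - ln (1 + b * (a - a)) / b)"
    using a b by (intro nn_integral_FTC_Icc) (auto intro!: derivative_eq_intros simp: add_pos_nonneg)
  then have right: "(\<integral>\<^sup>+x\<in>{a..2 * a}. ennreal (1 / (1 + b * (x - a))) \<partial>lborel) = ennreal (ln (1 + a * b) / b)"
    by (simp add: mult.commute)
  have "(\<integral>\<^sup>+x\<in>{0..2 * a}. ennreal (1 / (1 + b * \<bar>x - a\<bar>)) \<partial>lborel)
      \<le> (\<integral>\<^sup>+x. ennreal (1 / (1 + b * (a - x))) * indicator {0..a} x
             + ennreal (1 / (1 + b * (x - a))) * indicator {a..2 * a} x \<partial>lborel)"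
    by (intro nn_integral_mono) (auto simp: indicator_def)
  also have "\<dots> = ennreal (ln (1 + a * b) / b) + ennreal (ln (1 + a * b) / b)"
    by (subst nn_integral_add) (auto simp: left right)
  also have "\<dots> = ennreal (2 * (ln (1 + a * b) / b))"
    using a b by (subst ennreal_plus[symmetric]) auto
  finally show ?thesis .
qed

lemma inverse_one_plus_abs_diff_le_small:
  fixes X T :: real
  assumes "0 < T" "X \<le> T / 2"
  shows "1 / (1 + \<bar>X - T\<bar>) \<le> 2 / (1 + T)"
  using assms by (simp add: abs_if divide_simps)

lemma inverse_one_plus_abs_diff_le_large:
  fixes X T :: real
  assumes "0 < T" "2 * T \<le> X"
  shows "1 / (1 + \<bar>X - T\<bar>) \<le> 4 * (1 / ((1 + T) + X))"
  using assms by (simp add: abs_if divide_simps)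

lemma powr_le_half_if_le_half_root:
  fixes p T x :: real
  assumes p: "1 \<le> p" and T: "0 < T" and x: "0 \<le> x" "x \<le> T powr (1 / p) / 2"
  shows "x powr p \<le> T / 2"
proof -
  have "x powr p \<le> (T powr (1 / p) / 2) powr p"
    using x p by (intro powr_mono2) auto
  also have "\<dots> = T / 2 powr p"
    using T p by (simp add: powr_divide powr_powr)
  also have "\<dots> \<le> T / 2"
    using T p powr_mono[of 1 p 2] by (intro divide_left_mono) auto
  finally show ?thesis .
qed

lemma double_le_powr_if_double_root_le:
  fixes p T x :: real
  assumes p: "1 \<le> p" and T: "0 < T" and x: "2 * T powr (1 / p) \<le> x"
  shows "2 * T \<le> x powr p"
proof -
  have "2 * T \<le> 2 powr p * T"
    using T p powr_mono[of 1 p 2] by (intro mult_right_mono) auto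
  also have "\<dots> = (2 * T powr (1 / p)) powr p"
    using T p by (simp add: powr_mult powr_powr)
  also have "\<dots> \<le> x powr p"
    using x T p by (intro powr_mono2) auto
  finally show ?thesis .
qed

lemma inverse_one_plus_abs_diff_powr_le:
  fixes p T x :: real
  assumes p: "1 < p" and T: "1 < T" and x: "0 \<le> x"
  defines "a \<equiv> T powr (1 / p)"
  defines "b \<equiv> (a / 2) powr (p - 1)"
  shows "ennreal (1 / (1 + \<bar>x powr p - T\<bar>))
       \<le> ennreal (2 / (1 + T)) * indicator {0..a / 2} x + ennreal (1 / (1 + b * \<bar>x - a\<bar>)) * indicator {0..2 * a} x
         + ennreal 4 * ennreal (1 / ((1 + T) + x powr p))"
proof -
  consider "x \<le> a / 2" | "a / 2 \<le> x" "x \<le> 2 * a" | "2 * a \<le> x"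
    by linarith
  then show ?thesis
  proof cases
    case 1
    then have "ennreal (1 / (1 + \<bar>x powr p - T\<bar>)) \<le> ennreal (2 / (1 + T)) * indicator {0..a / 2} x"
      using powr_le_half_if_le_half_root[of p T x] inverse_one_plus_abs_diff_le_small[of T "x powr p"] p T x
      by (simp add: a_def ennreal_leI)
    then show ?thesis
      by (intro add_increasing2) auto
  next
    case 2
    have "0 < a" "a powr p = T"
      using T p by (simp_all add: a_def powr_powr)
    then have "b * \<bar>x - a\<bar> \<le> \<bar>x powr p - T\<bar>"
      using powr_diff_lower_bound[of p a x] p 2 by (simp add: b_def)
    then have "1 / (1 + \<bar>x powr p - T\<bar>) \<le> 1 / (1 + b * \<bar>x - a\<bar>)"
      using \<open>0 < a\<close> by (intro divide_left_mono) (auto simp: b_def add_pos_nonneg)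
    then have "ennreal (1 / (1 + \<bar>x powr p - T\<bar>)) \<le> ennreal (1 / (1 + b * \<bar>x - a\<bar>)) * indicator {0..2 * a} x"
      using 2 x by (simp add: ennreal_leI)
    then show ?thesis
      by (intro add_increasing add_increasing2) auto
  next
    case 3
    then have "ennreal (1 / (1 + \<bar>x powr p - T\<bar>)) \<le> ennreal 4 * ennreal (1 / ((1 + T) + x powr p))"
      using double_le_powr_if_double_root_le[of p T x] inverse_one_plus_abs_diff_le_large[of T "x powr p"] p T
      by (subst ennreal_mult[symmetric]) (auto intro!: ennreal_leI simp: a_def add_nonneg_nonneg)
    then show ?thesis
      by (intro add_increasing) auto
  qed
qed

lemma powr_divide_one_plus_le:
  fixes T s :: real
  assumes "0 < T" "0 \<le> s"
  shows "T powr s / (1 + T) \<le> (1 + T) powr (s - 1)"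
proof -
  have "T powr s \<le> (1 + T) powr s"
    using assms by (intro powr_mono2) auto
  then show ?thesis
    using assms by (simp add: powr_diff divide_right_mono)
qed

lemma powr_peak_width_bounds:
  fixes p T :: real
  assumes p: "1 < p" and T: "1 < T"
  defines "a \<equiv> T powr (1 / p)"
  defines "b \<equiv> (a / 2) powr (p - 1)"
  shows "a * b \<le> T" and "1 / b \<le> 2 powr p * (1 + T) powr (1 / p - 1)"
proof -
  have "0 < a" and aT: "a powr p = T"
    using T p by (simp_all add: a_def powr_powr)
  have "a * b \<le> a * a powr (p - 1)"
    unfolding b_def using \<open>0 < a\<close> p by (intro mult_left_mono powr_mono2) auto
  also have "\<dots> = T"
    using \<open>0 < a\<close> aT by (simp add: powr_mult_base)
  finally show "a * b \<le> T" .
  have "1 / b = (a / 2) powr (- (p - 1))"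
    by (simp only: b_def powr_minus divide_inverse mult_1)
  also have "\<dots> = 2 powr (p - 1) * a powr (- (p - 1))"
    using \<open>0 < a\<close> by (simp add: powr_divide[of a 2] powr_minus field_simps powr_add[symmetric])
  also have "a powr (- (p - 1)) = T powr (1 / p - 1)"
    using T p by (simp add: a_def powr_powr field_simps)
  also have "T powr (1 / p - 1) \<le> ((1 + T) / 2) powr (1 / p - 1)"
    using T p by (intro powr_mono2') (auto simp: field_simps)
  also have "((1 + T) / 2) powr (1 / p - 1) = (1 + T) powr (1 / p - 1) / 2 powr (1 / p - 1)"
    using T by (simp add: powr_divide)
  also have "\<dots> = 2 powr (1 - 1 / p) * (1 + T) powr (1 / p - 1)"
    using powr_minus[of 2 "1 / p - 1"] by (simp add: divide_inverse)
  finally have "1 / b \<le> 2 powr (p - 1) * 2 powr (1 - 1 / p) * (1 + T) powr (1 / p - 1)"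
    by (simp add: mult.assoc)
  also have "2 powr (p - 1) * 2 powr (1 - 1 / p) = 2 powr (p - 1 / p)"
    by (simp add: powr_add[symmetric])
  also have "\<dots> \<le> 2 powr p"
    using p by (intro powr_mono) auto
  finally show "1 / b \<le> 2 powr p * (1 + T) powr (1 / p - 1)"
    by (simp add: mult_right_mono)
qed

lemma subord_weight_neg_le:
  assumes p: "1 < p" and T: "1 < T"
  shows "subord_weight p (- T)
       \<le> ennreal ((1 + T) powr (1 / p - 1) * (1 + 4 * subord_const p + 2 powr (p + 1) * ln (1 + T)))"
proof -
  define a where "a = T powr (1 / p)"
  define b where "b = (a / 2) powr (p - 1)"
  define e where "e = (1 + T) powr (1 / p - 1)"
  have "0 < a" "0 < b" "0 < e" "0 < subord_const p"
    using T p subord_const_pos[OF p] by (simp_all add: a_def b_def e_def)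
  have "a / (1 + T) \<le> e"
    using powr_divide_one_plus_le[of T "1 / p"] T p by (simp add: a_def e_def)
  have "a * b \<le> T" "1 / b \<le> 2 powr p * e"
    using powr_peak_width_bounds[OF p T] by (simp_all add: a_def b_def e_def)
  then have "ln (1 + a * b) * (1 / b) \<le> ln (1 + T) * (2 powr p * e)"
    using mult_pos_pos[OF \<open>0 < a\<close> \<open>0 < b\<close>] \<open>0 < b\<close> T by (intro mult_mono) auto
  then have peak: "2 * (ln (1 + a * b) / b) \<le> 2 powr (p + 1) * e * ln (1 + T)"
    by (simp add: powr_add mult_ac)
  have e1: "ennreal (2 / (1 + T)) * ennreal (a / 2) = ennreal (a / (1 + T))"
    using \<open>0 < a\<close> T by (subst ennreal_mult[symmetric]) (auto simp: field_simps)
  have e2: "ennreal 4 * ennreal (e * subord_const p) = ennreal (4 * (e * subord_const p))"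
    using \<open>0 < e\<close> \<open>0 < subord_const p\<close> by (subst ennreal_mult[symmetric]) auto
  have "subord_weight p (- T)
      \<le> (\<integral>\<^sup>+x. ennreal (2 / (1 + T)) * indicator {0..a / 2} x
              + ennreal (1 / (1 + b * \<bar>x - a\<bar>)) * indicator {0..2 * a} x
              + ennreal 4 * ennreal (1 / ((1 + T) + x powr p)) * indicator {0..} x \<partial>lborel)"
    unfolding subord_weight_def
    using inverse_one_plus_abs_diff_powr_le[OF p T]
    by (intro nn_integral_mono) (simp add: a_def b_def indicator_def)
  also have "\<dots> = ennreal (2 / (1 + T)) * ennreal (a / 2)
      + (\<integral>\<^sup>+x\<in>{0..2 * a}. ennreal (1 / (1 + b * \<bar>x - a\<bar>)) \<partial>lborel)
      + ennreal 4 * ennreal (e * subord_const p)"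
    using \<open>0 < a\<close> T
    by (simp add: nn_integral_add nn_integral_cmult_indicator nn_integral_cmult mult.assoc
        nn_integral_subord_scale[OF p] e_def)
  also have "\<dots> \<le> ennreal (a / (1 + T)) + ennreal (2 * (ln (1 + a * b) / b)) + ennreal (4 * (e * subord_const p))"
    unfolding e1 e2 using nn_integral_inverse_one_plus_abs_le[OF \<open>0 < b\<close>] \<open>0 < a\<close>
    by (intro add_mono order_refl) simp
  also have "\<dots> = ennreal (a / (1 + T) + 2 * (ln (1 + a * b) / b) + 4 * (e * subord_const p))"
    using \<open>0 < a\<close> \<open>0 < b\<close> \<open>0 < e\<close> \<open>0 < subord_const p\<close> T
    by (simp add: ennreal_plus[symmetric] del: ennreal_plus)
  also have "\<dots> \<le> ennreal (e * (1 + 4 * subord_const p + 2 powr (p + 1) * ln (1 + T)))"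
    using \<open>a / (1 + T) \<le> e\<close> peak by (intro ennreal_leI) (simp add: algebra_simps)
  finally show ?thesis
    by (simp add: e_def)
qed

lemma subord_weight_le:
  assumes p: "1 < p"
  obtains C where
    "\<And>t. subord_weight p t \<le> ennreal (C * ((1 + \<bar>t\<bar>) powr (1 / p - 1) * (1 + indicator {..0} t * ln (1 + \<bar>t\<bar>))))"
proof -
  define K where "K = subord_const p"
  define C where "C = 1 + 4 * K + 2 powr (p + 1)"
  have "0 < K"
    using subord_const_pos[OF p] by (simp add: K_def)
  then have "4 * K \<le> C" "1 + 4 * K \<le> C" "2 powr (p + 1) \<le> C"
    using powr_ge_zero[of 2 "p + 1"] unfolding C_def by linarith+
  have "subord_weight p t \<le> ennreal (C * ((1 + \<bar>t\<bar>) powr (1 / p - 1) * (1 + indicator {..0} t * ln (1 + \<bar>t\<bar>))))"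
    for t :: real
  proof (cases "-1 \<le> t")
    case True
    have "(1 + \<bar>t\<bar>) powr (1 / p - 1) \<le> (1 + \<bar>t\<bar>) powr (1 / p - 1) * (1 + indicator {..0} t * ln (1 + \<bar>t\<bar>))"
      using mult_left_mono[of 1 "1 + indicator {..0} t * ln (1 + \<bar>t\<bar>)" "(1 + \<bar>t\<bar>) powr (1 / p - 1)"]
      by (simp add: indicator_def)
    then have "4 * K * (1 + \<bar>t\<bar>) powr (1 / p - 1)
        \<le> C * ((1 + \<bar>t\<bar>) powr (1 / p - 1) * (1 + indicator {..0} t * ln (1 + \<bar>t\<bar>)))"
      using \<open>4 * K \<le> C\<close> \<open>0 < K\<close> by (intro mult_mono) auto
    then show ?thesis
      using subord_weight_le_ge_neg_one[OF p True] by (auto simp: K_def intro: order_trans ennreal_leI)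
  next
    case False
    define T where "T = - t"
    have T: "1 < T" "t = - T" "\<bar>t\<bar> = T"
      using False by (auto simp: T_def)
    have "2 powr (p + 1) * ln (1 + T) \<le> C * ln (1 + T)"
      using \<open>1 < T\<close> \<open>2 powr (p + 1) \<le> C\<close> by (intro mult_right_mono) auto
    with \<open>1 + 4 * K \<le> C\<close> have bound: "1 + 4 * K + 2 powr (p + 1) * ln (1 + T) \<le> C * (1 + ln (1 + T))"
      unfolding distrib_left mult_1_right by linarith
    have "(1 + T) powr (1 / p - 1) * (1 + 4 * K + 2 powr (p + 1) * ln (1 + T))
        \<le> C * ((1 + T) powr (1 / p - 1) * (1 + ln (1 + T)))"
      using mult_left_mono[OF bound powr_ge_zero[of "1 + T" "1 / p - 1"]] by (simp add: mult_ac)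
    then have "subord_weight p (- T) \<le> ennreal (C * ((1 + T) powr (1 / p - 1) * (1 + ln (1 + T))))"
      using order_trans[OF subord_weight_neg_le[OF p \<open>1 < T\<close>] ennreal_leI] by (simp add: K_def)
    then show ?thesis
      using T by simp
  qed
  then show ?thesis
    using that by blast
qed

lemma nn_integral_subord_weight_finite:
  assumes p: "1 < p" and \<nu>: "\<nu> \<in> Mplus (1 - 1 / p)" and L: "left_log_moment (1 - 1 / p) \<nu> < \<infinity>"
  shows "(\<integral>\<^sup>+t. subord_weight p t \<partial>\<nu>) < \<infinity>"
proof -
  obtain C where C: "\<And>t. subord_weight p t
      \<le> ennreal (C * ((1 + \<bar>t\<bar>) powr (1 / p - 1) * (1 + indicator {..0} t * ln (1 + \<bar>t\<bar>))))"
    using subord_weight_le[OF p] by blast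
  have "subord_weight p t \<le> ennreal \<bar>C\<bar> * (ennreal ((1 + \<bar>t\<bar>) powr (- (1 - 1 / p)))
      + indicator {..0} t * ennreal (ln (\<bar>t\<bar> + 1) / (1 + \<bar>t\<bar>) powr (1 - 1 / p)))" for t
  proof -
    define A where "A = (1 + \<bar>t\<bar>) powr (- (1 - 1 / p))"
    define B where "B = ln (\<bar>t\<bar> + 1) / (1 + \<bar>t\<bar>) powr (1 - 1 / p)"
    have "0 \<le> A" "0 \<le> B"
      by (simp_all add: A_def B_def)
    have "(1 + \<bar>t\<bar>) powr (1 / p - 1) = inverse ((1 + \<bar>t\<bar>) powr (1 - 1 / p))"
      using powr_minus[of "1 + \<bar>t\<bar>" "1 - 1 / p"] by simp
    then have eq: "(1 + \<bar>t\<bar>) powr (1 / p - 1) * (1 + indicator {..0} t * ln (1 + \<bar>t\<bar>)) = A + indicator {..0} t * B"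
      by (simp add: A_def B_def divide_inverse algebra_simps add.commute)
    have "C * (A + indicator {..0} t * B) \<le> \<bar>C\<bar> * (A + indicator {..0} t * B)"
      using \<open>0 \<le> A\<close> \<open>0 \<le> B\<close> by (intro mult_right_mono) auto
    then have "subord_weight p t \<le> ennreal (\<bar>C\<bar> * (A + indicator {..0} t * B))"
      using C[of t] unfolding eq by (auto intro: order_trans ennreal_leI)
    also have "\<dots> = ennreal \<bar>C\<bar> * (ennreal A + indicator {..0} t * ennreal B)"
      using \<open>0 \<le> A\<close> \<open>0 \<le> B\<close> by (simp add: indicator_def ennreal_mult)
    finally show ?thesis
      by (simp add: A_def B_def)
  qed
  then have "(\<integral>\<^sup>+t. subord_weight p t \<partial>\<nu>)
      \<le> (\<integral>\<^sup>+t. ennreal \<bar>C\<bar> * (ennreal ((1 + \<bar>t\<bar>) powr (- (1 - 1 / p)))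
            + indicator {..0} t * ennreal (ln (\<bar>t\<bar> + 1) / (1 + \<bar>t\<bar>) powr (1 - 1 / p))) \<partial>\<nu>)"
    by (intro nn_integral_mono)
  also have "\<dots> = ennreal \<bar>C\<bar> * ((\<integral>\<^sup>+t. ennreal ((1 + \<bar>t\<bar>) powr (- (1 - 1 / p))) \<partial>\<nu>) + left_log_moment (1 - 1 / p) \<nu>)"
    unfolding left_log_moment_def
    by (simp add: nn_integral_cmult nn_integral_add Mplus_measurable_eq[OF \<nu>])
  also have "\<dots> < \<infinity>"
    using \<nu> L by (simp add: Mplus_def ennreal_mult_less_top)
  finally show ?thesis .
qed

section \<open>The subordinated measure\<close>

definition subord_measure :: "real \<Rightarrow> real measure \<Rightarrow> real measure" where
  "subord_measure p \<nu> =
     distr (density (\<nu> \<Otimes>\<^sub>M lborel) (\<lambda>(t, x). ennreal (indicator {0..} x / subord_const p)))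
       borel (\<lambda>(t, x). t + x powr p)"

lemma nn_integral_subord_measure:
  assumes \<nu>: "sets \<nu> = sets borel" and f[measurable]: "f \<in> borel_measurable borel"
  shows "(\<integral>\<^sup>+u. f u \<partial>subord_measure p \<nu>)
       = ennreal (1 / subord_const p) * (\<integral>\<^sup>+t. (\<integral>\<^sup>+x\<in>{0..}. f (t + x powr p) \<partial>lborel) \<partial>\<nu>)"
proof -
  note meas = measurable_pair_lborel_eq[OF \<nu>]
  have "(\<integral>\<^sup>+u. f u \<partial>subord_measure p \<nu>)
      = (\<integral>\<^sup>+w. ennreal (indicator {0..} (snd w) / subord_const p) * f (fst w + snd w powr p) \<partial>(\<nu> \<Otimes>\<^sub>M lborel))"
    unfolding subord_measure_def using f
    by (simp add: nn_integral_distr nn_integral_density meas case_prod_unfold)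
  also have "\<dots> = (\<integral>\<^sup>+t. (\<integral>\<^sup>+x. ennreal (1 / subord_const p) * (f (t + x powr p) * indicator {0..} x) \<partial>lborel) \<partial>\<nu>)"
    using f by (subst lborel.nn_integral_fst[symmetric])
      (auto simp: meas indicator_def intro!: nn_integral_cong)
  also have "\<dots> = ennreal (1 / subord_const p) * (\<integral>\<^sup>+t. (\<integral>\<^sup>+x\<in>{0..}. f (t + x powr p) \<partial>lborel) \<partial>\<nu>)"
  proof -
    have "(\<lambda>w. f (fst w + snd w powr p) * indicator {0..} (snd w)) \<in> borel_measurable (\<nu> \<Otimes>\<^sub>M lborel)"
      unfolding meas using f by measurable
    from lborel.borel_measurable_nn_integral_fst[OF this]
    have "(\<lambda>t. \<integral>\<^sup>+x\<in>{0..}. f (t + x powr p) \<partial>lborel) \<in> borel_measurable \<nu>"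
      by simp
    moreover have "(\<integral>\<^sup>+x. ennreal (1 / subord_const p) * (f (t + x powr p) * indicator {0..} x) \<partial>lborel)
        = ennreal (1 / subord_const p) * (\<integral>\<^sup>+x\<in>{0..}. f (t + x powr p) \<partial>lborel)" for t
      by (intro nn_integral_cmult) measurable
    ultimately show ?thesis
      by (simp add: nn_integral_cmult)
  qed
  finally show ?thesis .
qed

lemma subord_measure_in_Mplus_one:
  assumes \<nu>: "sets \<nu> = sets borel" and G: "(\<integral>\<^sup>+t. subord_weight p t \<partial>\<nu>) < \<infinity>"
  shows "subord_measure p \<nu> \<in> Mplus 1"
proof -
  have "(\<integral>\<^sup>+u. ennreal ((1 + \<bar>u\<bar>) powr (-1)) \<partial>subord_measure p \<nu>)
      = ennreal (1 / subord_const p) * (\<integral>\<^sup>+t. subord_weight p t \<partial>\<nu>)"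
    unfolding subord_weight_def using \<nu> by (subst nn_integral_subord_measure) auto
  also have "\<dots> < \<infinity>"
    using G by (simp add: ennreal_mult_less_top)
  finally show ?thesis
    by (simp add: Mplus_def subord_measure_def)
qed

lemma integral_subord_measure:
  fixes g :: "real \<Rightarrow> 'b::{banach, second_countable_topology}"
  assumes p: "1 < p" and \<nu>: "sigma_finite_measure \<nu>" "sets \<nu> = sets borel"
    and g: "integrable (subord_measure p \<nu>) g"
  shows "(\<integral>u. g u \<partial>subord_measure p \<nu>)
       = (\<integral>t. (\<integral>x. (indicator {0..} x / subord_const p) *\<^sub>R g (t + x powr p) \<partial>lborel) \<partial>\<nu>)"
proof -
  interpret pair_sigma_finite \<nu> lborel
    using \<nu>(1) by (intro pair_sigma_finite.intro sigma_finite_lborel)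
  define k where "k w = indicator {0..} (snd w) / subord_const p" for w :: "real \<times> real"
  define F where "F w = fst w + snd w powr p" for w :: "real \<times> real"
  have [measurable]: "F \<in> borel_measurable (\<nu> \<Otimes>\<^sub>M lborel)" "k \<in> borel_measurable (\<nu> \<Otimes>\<^sub>M lborel)"
    unfolding measurable_pair_lborel_eq[OF \<nu>(2)] F_def k_def by measurable
  have sets_\<mu>: "sets (subord_measure p \<nu>) = sets borel"
    by (simp add: subord_measure_def)
  have [measurable]: "g \<in> borel_measurable borel"
    using borel_measurable_integrable[OF g] by (simp add: measurable_cong_sets[OF sets_\<mu> refl])
  have k_nonneg: "AE w in \<nu> \<Otimes>\<^sub>M lborel. 0 \<le> k w"
    using subord_const_pos[OF p] by (simp add: k_def)
  have \<mu>: "subord_measure p \<nu> = distr (density (\<nu> \<Otimes>\<^sub>M lborel) k) borel F"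
    unfolding subord_measure_def k_def F_def by (simp add: case_prod_unfold)
  have int: "integrable (\<nu> \<Otimes>\<^sub>M lborel) (\<lambda>w. k w *\<^sub>R g (F w))"
    using g unfolding \<mu> by (simp add: integrable_distr_eq integrable_density k_nonneg)
  have "(\<integral>u. g u \<partial>subord_measure p \<nu>) = (\<integral>w. k w *\<^sub>R g (F w) \<partial>(\<nu> \<Otimes>\<^sub>M lborel))"
    unfolding \<mu> by (simp add: integral_distr integral_density k_nonneg)
  also have "\<dots> = (\<integral>t. (\<integral>x. k (t, x) *\<^sub>R g (F (t, x)) \<partial>lborel) \<partial>\<nu>)"
    by (rule integral_fst'[OF int, symmetric])
  finally show ?thesis
    by (simp add: k_def F_def)
qed

lemma Cauchy_tr_subord_measure:
  assumes p: "1 < p" and \<nu>: "\<nu> \<in> Mplus (1 - 1 / p)" and G: "(\<integral>\<^sup>+t. subord_weight p t \<partial>\<nu>) < \<infinity>"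
    and z: "0 < Im z"
  shows "Cauchy_tr 1 (subord_measure p \<nu>) z = Cauchy_tr (1 - 1 / p) \<nu> z"
proof -
  have "subord_measure p \<nu> \<in> Mplus 1"
    using subord_measure_in_Mplus_one G \<nu> by (simp add: Mplus_def)
  then have "Cauchy_tr 1 (subord_measure p \<nu>) z
      = (\<integral>t. (\<integral>x. (indicator {0..} x / subord_const p) *\<^sub>R inverse (z + of_real (t + x powr p)) \<partial>lborel) \<partial>\<nu>)"
    unfolding Cauchy_tr_def
    using Mplus_integrable_Cauchy_kernel[OF _ _ z, of _ 1] Mplus_sigma_finite[OF \<nu>] p \<nu>
    by (subst integral_subord_measure) (auto simp: Mplus_def)
  also have "\<dots> = (\<integral>t. inverse ((z + of_real t) powr of_real (1 - 1 / p)) \<partial>\<nu>)"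
  proof (intro Bochner_Integration.integral_cong refl)
    fix t :: real
    have "z + of_real t \<notin> \<real>\<^sub>\<le>\<^sub>0"
      using z by (auto elim!: nonpos_Reals_cases simp: complex_eq_iff)
    have "(\<integral>x. (indicator {0..} x / subord_const p) *\<^sub>R inverse (z + of_real (t + x powr p)) \<partial>lborel)
        = (\<integral>x. (indicator {0..} x / subord_const p) *\<^sub>R inverse ((z + of_real t) + of_real (x powr p)) \<partial>lborel)"
      by (simp add: add.assoc)
    also have "\<dots> = inverse ((z + of_real t) powr of_real (1 - 1 / p))"
      by (rule subord_kernel_integral[OF p \<open>z + of_real t \<notin> \<real>\<^sub>\<le>\<^sub>0\<close>])
    finally show "(\<integral>x. (indicator {0..} x / subord_const p) *\<^sub>R inverse (z + of_real (t + x powr p)) \<partial>lborel)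
        = inverse ((z + of_real t) powr of_real (1 - 1 / p))" .
  qed
  also have "\<dots> = Cauchy_tr (1 - 1 / p) \<nu> z"
    by (simp add: Cauchy_tr_def)
  finally show ?thesis .
qed

theorem theorem7p18:
  fixes \<alpha> :: real and \<nu> :: "real measure"
  assumes "0 < \<alpha>" and "\<alpha> < 1" and "\<nu> \<in> Mplus \<alpha>"
  shows "(\<exists>\<mu>. \<mu> \<in> Mplus 1 \<and>
            (\<forall>z. 0 < Im z \<longrightarrow> Cauchy_tr \<alpha> \<nu> z = Cauchy_tr 1 \<mu> z))
         \<longleftrightarrow>
         (\<integral>\<^sup>+ t. indicator {..0} t * ennreal (ln (\<bar>t\<bar> + 1) / (1 + \<bar>t\<bar>) powr \<alpha>) \<partial>\<nu>) < \<infinity>"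
  unfolding left_log_moment_def[symmetric]
proof
  assume "\<exists>\<mu>. \<mu> \<in> Mplus 1 \<and> (\<forall>z. 0 < Im z \<longrightarrow> Cauchy_tr \<alpha> \<nu> z = Cauchy_tr 1 \<mu> z)"
  then show "left_log_moment \<alpha> \<nu> < \<infinity>"
    using left_log_moment_finite_if_Cauchy_tr_eq assms by blast
next
  assume L: "left_log_moment \<alpha> \<nu> < \<infinity>"
  define p where "p = 1 / (1 - \<alpha>)"
  have p: "1 < p" and \<alpha>: "\<alpha> = 1 - 1 / p"
    using assms(1,2) by (simp_all add: p_def field_simps)
  have G: "(\<integral>\<^sup>+t. subord_weight p t \<partial>\<nu>) < \<infinity>"
    using nn_integral_subord_weight_finite[OF p] assms(3) L unfolding \<alpha> by blast
  show "\<exists>\<mu>. \<mu> \<in> Mplus 1 \<and> (\<forall>z. 0 < Im z \<longrightarrow> Cauchy_tr \<alpha> \<nu> z = Cauchy_tr 1 \<mu> z)"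
  proof (intro exI conjI allI impI)
    show "subord_measure p \<nu> \<in> Mplus 1"
      using subord_measure_in_Mplus_one G assms(3) by (simp add: Mplus_def)
    show "Cauchy_tr \<alpha> \<nu> z = Cauchy_tr 1 (subord_measure p \<nu>) z" if "0 < Im z" for z
      using Cauchy_tr_subord_measure[OF p _ G that] assms(3) unfolding \<alpha> by simp
  qed
qed

end
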